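(* Let $k\ge1$, $n_1,\dots,n_k\ge2$, $n=n_1+\cdots+n_k$, and $C\in\mathbb{S}^{n+1}$. Consider (Spheres-BM): minimize $\langle CY,Y\rangle$ over $Y\in\mathbb{R}^{(n+1)\times p}$ with $Y^\top=(Y_1^\top\ \cdots\ Y_k^\top\ y)$, $Y_i\in\mathbb{R}^{n_i\times p}$, $y\in\mathbb{R}^p$, subject to $\|Y_1\|=\cdots=\|Y_k\|=1$ and $\|y\|=1$; and (Spheres-SDP): minimize $\langle C,X\rangle$ over $X\in\mathbb{S}^{n+1}$ subject to $\operatorname{tr}(X_{11})=\cdots=\operatorname{tr}(X_{kk})=1$, $X_{n+1,n+1}=1$, $X\succeq0$. If $p\ge\max(2,k)$, then every second-order critical point $Y$ of (Spheres-BM) is globally optimal for (Spheres-BM), and $YY^\top$ is globally optimal for (Spheres-SDP).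
   Context: $\langle U,V\rangle=\operatorname{tr}(U^\top V)$, $\|\cdot\|$ Frobenius/Euclidean norm; $\mathbb{S}^{N}$ the real symmetric $N\times N$ matrices. $X_{ii}$ denotes the $n_i\times n_i$ diagonal block of $X$ corresponding to the $i$-th group of coordinates (the first $n$ coordinates are split consecutively into groups of sizes $n_1,\dots,n_k$), and $X_{n+1,n+1}$ its last diagonal entry. Both problems are instances of the general form with constraint matrices $A_i$ ($i=1,\dots,k$) equal to the block-diagonal matrix with $I_{n_i}$ in the $i$-th block and zeros elsewhere, $A_{k+1}=e_{n+1}e_{n+1}^\top$, and all right-hand sides equal to $1$; write $\mathcal{A}(X)_i=\langle A_i,X\rangle$, $\mathcal{A}^*(\nu)=\sum_i\nu_iA_i$. For feasible $Y$: $T_Y=\{\dot Y:\langle A_iY,\dot Y\rangle=0\ \forall i\}$; $G_{ij}=\langle A_iY,A_jY\rangle$; $\mu=G^\dagger\mathcal{A}(CYY^\top)$; $S(Y)=C-\mathcal{A}^*(\mu)$. $Y$ is second-order critical if $S(Y)Y=0$ and $\langle\dot Y,S(Y)\dot Y\rangle\ge0$ for all $\dot Y\in T_Y$. *)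

theory Defs
  imports "Jordan_Normal_Form.Matrix"
begin

(* The groups of coordinates are
   given by a list ns = [n_1,...,n_k]; coordinates are 0-indexed, group i
   (i < k) occupies rows goff ns i ..< goff ns i + ns!i, and the last
   coordinate (the paper's n+1) is row n = sum_list ns. *)

definition mtrace :: "real mat \<Rightarrow> real" where
  "mtrace X = (\<Sum>i<dim_row X. X $$ (i,i))"

definition frob_inner :: "real mat \<Rightarrow> real mat \<Rightarrow> real" where
  "frob_inner U V = mtrace (transpose_mat U * V)"

definition frob_norm :: "real mat \<Rightarrow> real" where
  "frob_norm U = sqrt (frob_inner U U)"

definition goff :: "nat list \<Rightarrow> nat \<Rightarrow> nat" where
  "goff ns i = sum_list (take i ns)"

definition blk :: "nat list \<Rightarrow> nat \<Rightarrow> real mat \<Rightarrow> real mat" where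
  "blk ns i Y = mat (ns ! i) (dim_col Y) (\<lambda>(a,j). Y $$ (goff ns i + a, j))"

definition lastrow :: "nat list \<Rightarrow> real mat \<Rightarrow> real mat" where
  "lastrow ns Y = mat 1 (dim_col Y) (\<lambda>(a,j). Y $$ (sum_list ns, j))"

definition dblk :: "nat list \<Rightarrow> nat \<Rightarrow> real mat \<Rightarrow> real mat" where
  "dblk ns i X = mat (ns ! i) (ns ! i) (\<lambda>(a,b). X $$ (goff ns i + a, goff ns i + b))"

(* constraint matrices A_0,...,A_k (paper: A_1..A_{k+1}), size (n+1)x(n+1) *)
definition Acon :: "nat list \<Rightarrow> nat \<Rightarrow> real mat" where
  "Acon ns i = mat (sum_list ns + 1) (sum_list ns + 1) (\<lambda>(a,b).
     if a = b \<and> (if i < length ns then goff ns i \<le> a \<and> a < goff ns i + ns ! i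
                  else a = sum_list ns) then 1 else 0)"

definition Aop :: "nat list \<Rightarrow> real mat \<Rightarrow> real vec" where
  "Aop ns X = vec (length ns + 1) (\<lambda>i. frob_inner (Acon ns i) X)"

definition Aadj :: "nat list \<Rightarrow> real vec \<Rightarrow> real mat" where
  "Aadj ns \<nu> = mat (sum_list ns + 1) (sum_list ns + 1)
     (\<lambda>(a,b). \<Sum>i<length ns + 1. \<nu> $ i * Acon ns i $$ (a,b))"

definition pinv :: "real mat \<Rightarrow> real mat" where
  "pinv G = (THE H. H \<in> carrier_mat (dim_col G) (dim_row G) \<and>
      G * H * G = G \<and> H * G * H = H \<and>
      transpose_mat (G * H) = G * H \<and> transpose_mat (H * G) = H * G)"

definition Gram :: "nat list \<Rightarrow> real mat \<Rightarrow> real mat" where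
  "Gram ns Y = mat (length ns + 1) (length ns + 1)
     (\<lambda>(i,j). frob_inner (Acon ns i * Y) (Acon ns j * Y))"

definition mult :: "nat list \<Rightarrow> real mat \<Rightarrow> real mat \<Rightarrow> real vec" where
  "mult ns C Y = pinv (Gram ns Y) *\<^sub>v Aop ns (C * Y * transpose_mat Y)"

definition Smat :: "nat list \<Rightarrow> real mat \<Rightarrow> real mat \<Rightarrow> real mat" where
  "Smat ns C Y = C - Aadj ns (mult ns C Y)"

definition tangent :: "nat list \<Rightarrow> real mat \<Rightarrow> real mat set" where
  "tangent ns Y = {Yd \<in> carrier_mat (sum_list ns + 1) (dim_col Y).
      \<forall>i<length ns + 1. frob_inner (Acon ns i * Y) Yd = 0}"

definition bm_feasible :: "nat list \<Rightarrow> nat \<Rightarrow> real mat \<Rightarrow> bool" where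
  "bm_feasible ns p Y \<longleftrightarrow> Y \<in> carrier_mat (sum_list ns + 1) p \<and>
     (\<forall>i<length ns. frob_norm (blk ns i Y) = 1) \<and> frob_norm (lastrow ns Y) = 1"

definition bm_cost :: "real mat \<Rightarrow> real mat \<Rightarrow> real" where
  "bm_cost C Y = frob_inner (C * Y) Y"

definition sdp_cost :: "real mat \<Rightarrow> real mat \<Rightarrow> real" where
  "sdp_cost C X = frob_inner C X"

definition psd :: "real mat \<Rightarrow> bool" where
  "psd X \<longleftrightarrow> (\<forall>v \<in> carrier_vec (dim_row X). 0 \<le> v \<bullet> (X *\<^sub>v v))"

definition sdp_feasible :: "nat list \<Rightarrow> real mat \<Rightarrow> bool" where
  "sdp_feasible ns X \<longleftrightarrow> X \<in> carrier_mat (sum_list ns + 1) (sum_list ns + 1) \<and>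
     transpose_mat X = X \<and>
     (\<forall>i<length ns. mtrace (dblk ns i X) = 1) \<and>
     X $$ (sum_list ns, sum_list ns) = 1 \<and> psd X"

definition second_order_critical :: "nat list \<Rightarrow> nat \<Rightarrow> real mat \<Rightarrow> real mat \<Rightarrow> bool" where
  "second_order_critical ns p C Y \<longleftrightarrow> bm_feasible ns p Y \<and>
     Smat ns C Y * Y = 0\<^sub>m (sum_list ns + 1) p \<and>
     (\<forall>Yd \<in> tangent ns Y. 0 \<le> frob_inner Yd (Smat ns C Y * Yd))"

end

theory Submission
  imports Defs "Jordan_Normal_Form.Determinant"
begin

(* Let S = C - A*(mu) for the multipliers mu of Y.  For every SDP-feasible X the trace constraints
   give <C, X> = <S, X> + sum_i mu_i, and first-order criticality S Y = 0 gives <S, Y Y^T> = 0.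
   Hence Y Y^T, and with it Y, is optimal as soon as S is positive semidefinite, because the
   Frobenius product of two psd matrices is nonnegative.

   Second-order criticality forces S to be psd when p >= max 2 k.  If g^T S g < 0, adding to g a
   multiple of Y y^T (which lies in the kernel of S) gives f with vanishing last entry and
   f^T S f < 0.  Every direction f z^T + Y M has curvature |z|^2 f^T S f, so it suffices to find a
   tangent direction of this form with z <> 0; its k+1 tangency constraints are linear in (z, M),
   and the last one does not involve z, which leaves enough room when p >= k and p >= 2.
   Nothing about the multipliers mu is used beyond S Y = 0. *)

section \<open>Positive semidefinite forms\<close>

definition bilin_form :: "nat \<Rightarrow> (nat \<Rightarrow> nat \<Rightarrow> real) \<Rightarrow> (nat \<Rightarrow> real) \<Rightarrow> (nat \<Rightarrow> real) \<Rightarrow> real" where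
  "bilin_form n S f g = (\<Sum>a<n. f a * (\<Sum>b<n. S a b * g b))"

abbreviation quad_form :: "nat \<Rightarrow> (nat \<Rightarrow> nat \<Rightarrow> real) \<Rightarrow> (nat \<Rightarrow> real) \<Rightarrow> real" where
  "quad_form n S f \<equiv> bilin_form n S f f"

definition psd_form :: "nat \<Rightarrow> (nat \<Rightarrow> nat \<Rightarrow> real) \<Rightarrow> bool" where
  "psd_form n S \<longleftrightarrow> (\<forall>f. 0 \<le> quad_form n S f)"

definition symmetric_form :: "nat \<Rightarrow> (nat \<Rightarrow> nat \<Rightarrow> real) \<Rightarrow> bool" where
  "symmetric_form n S \<longleftrightarrow> (\<forall>a<n. \<forall>b<n. S a b = S b a)"

lemma quad_form_combination:
  "quad_form n S (\<lambda>t. c * g t + h t) =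
     c\<^sup>2 * quad_form n S g + c * bilin_form n S g h + c * bilin_form n S h g + quad_form n S h"
  by (simp add: bilin_form_def algebra_simps sum.distrib sum_distrib_left power2_eq_square)

lemma bilin_form_delta_left:
  "a < n \<Longrightarrow> bilin_form n S (\<lambda>t. of_bool (t = a)) g = (\<Sum>b<n. S a b * g b)"
  by (simp add: bilin_form_def if_distrib)

lemma bilin_form_delta_right:
  "b < n \<Longrightarrow> bilin_form n S f (\<lambda>t. of_bool (t = b)) = (\<Sum>a<n. f a * S a b)"
  by (simp add: bilin_form_def if_distrib)

lemma bilin_form_commute:
  assumes "symmetric_form n S"
  shows "bilin_form n S f g = bilin_form n S g f"
proof -
  have "bilin_form n S f g = (\<Sum>a<n. \<Sum>b<n. g b * S b a * f a)"
    using assms by (auto simp: bilin_form_def symmetric_form_def sum_distrib_left intro!: sum.cong)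
  also have "\<dots> = bilin_form n S g f"
    by (subst sum.swap) (simp add: bilin_form_def sum_distrib_left mult.assoc)
  finally show ?thesis .
qed

lemma quad_form_add_kernel:
  assumes sym: "symmetric_form n S" and kernel: "\<And>a. a < n \<Longrightarrow> (\<Sum>b<n. S a b * h b) = 0"
  shows "quad_form n S (\<lambda>t. c * f t + h t) = c\<^sup>2 * quad_form n S f"
proof -
  have "bilin_form n S f h = 0" "bilin_form n S h h = 0"
    using kernel by (simp_all add: bilin_form_def)
  moreover have "bilin_form n S h f = 0"
    using bilin_form_commute[OF sym, of h f] calculation(1) by simp
  ultimately show ?thesis
    by (simp add: quad_form_combination)
qed

lemma quad_form_delta: "a < n \<Longrightarrow> quad_form n S (\<lambda>t. of_bool (t = a)) = S a a"
  by (simp add: bilin_form_delta_left if_distrib)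

lemma psd_form_diag_nonneg: "psd_form n S \<Longrightarrow> a < n \<Longrightarrow> 0 \<le> S a a"
  by (metis psd_form_def quad_form_delta)

lemma psd_form_zero_diag:
  assumes psd: "psd_form n S" and sym: "symmetric_form n S"
    and ab: "a < n" "b < n" and zero: "S a a = 0"
  shows "S a b = 0"
proof (rule ccontr)
  assume nz: "S a b \<noteq> 0"
  define c where "c = - (S b b + 1) / (2 * S a b)"
  have "quad_form n S (\<lambda>t. c * of_bool (t = a) + of_bool (t = b)) = 2 * c * S a b + S b b"
    using ab zero sym
    by (simp add: quad_form_combination bilin_form_delta_left symmetric_form_def if_distrib power2_eq_square)
  also have "\<dots> = -1"
    using nz by (simp add: c_def field_simps)
  finally show False
    using psd[unfolded psd_form_def, rule_format, of "\<lambda>t. c * of_bool (t = a) + of_bool (t = b)"]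
    by simp
qed

lemma psd_form_schur_complement:
  assumes psd: "psd_form n X" and sym: "symmetric_form n X"
    and a0: "a0 < n" and d: "X a0 a0 > 0"
  shows "psd_form n (\<lambda>a b. X a b - X a a0 * X b a0 / X a0 a0)"
  unfolding psd_form_def
proof
  fix f
  define d where "d = X a0 a0"
  define t where "t = (\<Sum>a<n. f a * X a a0)"
  have left: "bilin_form n X (\<lambda>u. of_bool (u = a0)) f = t"
    using a0 sym by (auto simp: bilin_form_delta_left t_def symmetric_form_def mult.commute intro!: sum.cong)
  have right: "bilin_form n X f (\<lambda>u. of_bool (u = a0)) = t"
    using a0 by (simp add: bilin_form_delta_right t_def)
  have "quad_form n (\<lambda>a b. X a b - X a a0 * X b a0 / d) f = quad_form n X f - t\<^sup>2 / d"
    by (simp add: bilin_form_def t_def algebra_simps sum_subtractf sum_distrib_left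
        sum_divide_distrib power2_eq_square sum_product)
  also have "\<dots> = quad_form n X (\<lambda>u. (- t / d) * of_bool (u = a0) + f u)"
    unfolding quad_form_combination using a0 d left right
    by (simp add: bilin_form_delta_left d_def field_simps power2_eq_square if_distrib)
  finally show "0 \<le> quad_form n (\<lambda>a b. X a b - X a a0 * X b a0 / X a0 a0) f"
    using psd by (simp add: psd_form_def d_def)
qed

(* Induction on the number of nonzero diagonal entries of X: for d = X a0 a0 > 0 and x the a0-th
   column of X, the Schur complement X - x x^T / d is psd with fewer nonzero diagonal entries, and
   the removed part contributes <S, x x^T> / d = x^T S x / d >= 0. *)

lemma psd_form_inner_nonneg:
  assumes S: "psd_form n S" and "psd_form n X" "symmetric_form n X"
  shows "0 \<le> (\<Sum>a<n. \<Sum>b<n. S a b * X a b)"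
  using assms(2,3)
proof (induction "card {a. a < n \<and> X a a \<noteq> 0}" arbitrary: X rule: less_induct)
  case less
  show ?case
  proof (cases "\<exists>a0<n. X a0 a0 \<noteq> 0")
    case False
    then show ?thesis
      using psd_form_zero_diag[OF less.prems] by simp
  next
    case True
    then obtain a0 where a0: "a0 < n" "X a0 a0 \<noteq> 0" by blast
    define d where "d = X a0 a0"
    have d: "d > 0"
      using psd_form_diag_nonneg[OF less.prems(1) a0(1)] a0(2) by (simp add: d_def)
    define X' where "X' = (\<lambda>a b. X a b - X a a0 * X b a0 / d)"
    have X': "psd_form n X'" "symmetric_form n X'"
      using psd_form_schur_complement[OF less.prems a0(1)] d less.prems(2)
      by (simp_all add: X'_def d_def symmetric_form_def mult.commute)
    have "{a. a < n \<and> X' a a \<noteq> 0} \<subseteq> {a. a < n \<and> X a a \<noteq> 0} - {a0}"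
      using d psd_form_zero_diag[OF less.prems _ a0(1)] by (auto simp: X'_def d_def)
    then have "card {a. a < n \<and> X' a a \<noteq> 0} \<le> card ({a. a < n \<and> X a a \<noteq> 0} - {a0})"
      by (intro card_mono) auto
    also have "\<dots> < card {a. a < n \<and> X a a \<noteq> 0}"
      using a0 by (intro card_Diff1_less) auto
    finally have "0 \<le> (\<Sum>a<n. \<Sum>b<n. S a b * X' a b)"
      using less.hyps X' by blast
    moreover have "0 \<le> quad_form n S (\<lambda>a. X a a0) / d"
      using S d by (simp add: psd_form_def)
    moreover have "(\<Sum>a<n. \<Sum>b<n. S a b * X a b) =
        (\<Sum>a<n. \<Sum>b<n. S a b * X' a b) + quad_form n S (\<lambda>a. X a a0) / d"
      by (simp add: X'_def bilin_form_def algebra_simps sum.distrib sum_subtractf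
          sum_distrib_left sum_divide_distrib)
    ultimately show ?thesis by linarith
  qed
qed

lemma homogeneous_system_nontrivial_solution:
  fixes c :: "nat \<Rightarrow> nat \<Rightarrow> real"
  assumes "m < q"
  shows "\<exists>x. (\<exists>j<q. x j \<noteq> 0) \<and> (\<forall>i<m. (\<Sum>j<q. c i j * x j) = 0)"
proof -
  define A where "A = mat q q (\<lambda>(i, j). if i < m then c i j else 0)"
  have A: "A \<in> carrier_mat q q"
    by (simp add: A_def)
  have "A = mat\<^sub>r q q (\<lambda>i. if i = q - 1 then 0\<^sub>v q else row A i)"
    using assms by (intro eq_matI) (auto simp: A_def)
  then have "det A = 0"
    using det_row_0[of "q - 1" q "row A"] A assms by fastforce
  then obtain v where v: "v \<in> carrier_vec q" "v \<noteq> 0\<^sub>v q" "A *\<^sub>v v = 0\<^sub>v q"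
    using det_0_iff_vec_prod_zero[OF A] by auto
  have "\<exists>j<q. v $ j \<noteq> 0"
    using v(1,2) by (metis eq_vecI carrier_vecD index_zero_vec)
  moreover have "(\<Sum>j<q. c i j * v $ j) = 0" if "i < m" for i
    using that assms v(1) arg_cong[OF v(3), of "\<lambda>w. w $ i"]
    by (simp add: A_def scalar_prod_def lessThan_atLeast0)
  ultimately show ?thesis by blast
qed

section \<open>Curvature along tangent directions\<close>

definition annihilates :: "nat \<Rightarrow> nat \<Rightarrow> (nat \<Rightarrow> nat \<Rightarrow> real) \<Rightarrow> (nat \<Rightarrow> nat \<Rightarrow> real) \<Rightarrow> bool" where
  "annihilates n p S Y \<longleftrightarrow> (\<forall>a<n. \<forall>j<p. (\<Sum>b<n. S a b * Y b j) = 0)"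

(* <A_i Y, W> for the diagonal projection A_i onto the rows G i *)
definition group_pairing ::
  "(nat \<Rightarrow> nat set) \<Rightarrow> nat \<Rightarrow> (nat \<Rightarrow> nat \<Rightarrow> real) \<Rightarrow> (nat \<Rightarrow> nat \<Rightarrow> real) \<Rightarrow> nat \<Rightarrow> real" where
  "group_pairing G p Y W i = (\<Sum>j<p. \<Sum>a\<in>G i. Y a j * W a j)"

lemma annihilates_mult:
  assumes "annihilates n p S Y" "a < n"
  shows "(\<Sum>b<n. S a b * (\<Sum>j<p. Y b j * w j)) = 0"
proof -
  have "(\<Sum>b<n. S a b * (\<Sum>j<p. Y b j * w j)) = (\<Sum>b<n. \<Sum>j<p. S a b * Y b j * w j)"
    by (simp add: sum_distrib_left mult.assoc)
  also have "\<dots> = (\<Sum>j<p. \<Sum>b<n. S a b * Y b j * w j)"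
    by (rule sum.swap)
  also have "\<dots> = (\<Sum>j<p. (\<Sum>b<n. S a b * Y b j) * w j)"
    by (simp add: sum_distrib_right)
  finally show ?thesis
    using assms by (simp add: annihilates_def)
qed

lemma exists_negative_direction_vanishing_at:
  assumes sym: "symmetric_form n S" and SY: "annihilates n p S Y"
    and norm: "(\<Sum>j<p. (Y r j)\<^sup>2) = 1" and neg: "quad_form n S g < 0"
  obtains f where "f r = 0" "quad_form n S f < 0"
proof -
  define h where "h a = (\<Sum>j<p. Y a j * (- g r * Y r j))" for a
  have "quad_form n S (\<lambda>a. 1 * g a + h a) = 1\<^sup>2 * quad_form n S g"
    unfolding h_def by (intro quad_form_add_kernel sym annihilates_mult[OF SY])
  moreover have "h r = - g r * (\<Sum>j<p. (Y r j)\<^sup>2)"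
    by (simp add: h_def sum_distrib_left power2_eq_square mult_ac)
  ultimately show thesis
    using that[of "\<lambda>a. g a + h a"] neg norm by simp
qed

lemma curvature_outer_plus_mult:
  assumes sym: "symmetric_form n S" and SY: "annihilates n p S Y"
  shows "(\<Sum>j<p. quad_form n S (\<lambda>a. z j * f a + (\<Sum>l<p. Y a l * M l j))) =
    (\<Sum>j<p. (z j)\<^sup>2) * quad_form n S f"
proof -
  have "quad_form n S (\<lambda>a. z j * f a + (\<Sum>l<p. Y a l * M l j)) = (z j)\<^sup>2 * quad_form n S f" for j
    by (intro quad_form_add_kernel sym annihilates_mult[OF SY])
  then show ?thesis
    by (simp add: sum_distrib_right)
qed

lemma group_pairing_outer_plus_mult:
  "group_pairing G p Y (\<lambda>a j. z j * f a + (\<Sum>l<p. Y a l * (x * M l j))) i =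
     (\<Sum>j<p. z j * (\<Sum>a\<in>G i. Y a j * f a)) + x * group_pairing G p Y (\<lambda>a j. \<Sum>l<p. Y a l * M l j) i"
  by (simp add: group_pairing_def algebra_simps sum.distrib sum_distrib_left)

lemma group_pairing_gram:
  "group_pairing G p Y (\<lambda>a j. \<Sum>l<p. Y a l * (z l * z j)) i = (\<Sum>a\<in>G i. (\<Sum>j<p. Y a j * z j)\<^sup>2)"
proof -
  have "group_pairing G p Y (\<lambda>a j. \<Sum>l<p. Y a l * (z l * z j)) i =
      (\<Sum>j<p. \<Sum>a\<in>G i. \<Sum>l<p. (Y a j * z j) * (Y a l * z l))"
    by (simp add: group_pairing_def sum_distrib_left mult_ac)
  also have "\<dots> = (\<Sum>a\<in>G i. (\<Sum>j<p. Y a j * z j)\<^sup>2)"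
    by (subst sum.swap) (simp add: power2_eq_square sum_product)
  finally show ?thesis .
qed

lemma tangent_outer_plus_mult_if_separating:
  fixes G :: "nat \<Rightarrow> nat set" and p :: nat and Y M :: "nat \<Rightarrow> nat \<Rightarrow> real"
  defines "B \<equiv> group_pairing G p Y (\<lambda>a j. \<Sum>l<p. Y a l * M l j)"
  assumes G: "G k = {r}" and f: "f r = 0" and p: "k \<le> p"
    and sep: "B k = 0" "i0 < k" "B i0 \<noteq> 0"
  shows "\<exists>z M'. (\<exists>j<p. z j \<noteq> 0) \<and>
    (\<forall>i\<le>k. group_pairing G p Y (\<lambda>a j. z j * f a + (\<Sum>l<p. Y a l * M' l j)) i = 0)"
proof -
  define c where "c i j = (\<Sum>a\<in>G i. Y a j * f a)" for i j
  obtain x where x: "\<exists>j<p+1. x j \<noteq> 0"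
      "\<forall>i<k. (\<Sum>j<p+1. (if j < p then c i j else B i) * x j) = 0"
    using homogeneous_system_nontrivial_solution[of k "p+1" "\<lambda>i j. if j < p then c i j else B i"] p
    by auto
  have x': "(\<Sum>j<p. x j * c i j) + x p * B i = 0" if "i < k" for i
    using x(2) that by (simp add: mult.commute)
  have tangent: "group_pairing G p Y (\<lambda>a j. x j * f a + (\<Sum>l<p. Y a l * (x p * M l j))) i = 0"
    if "i \<le> k" for i
  proof (cases "i = k")
    case True
    then show ?thesis
      unfolding group_pairing_outer_plus_mult using G f sep(1) by (simp add: B_def)
  next
    case False
    then show ?thesis
      unfolding group_pairing_outer_plus_mult using x' that by (simp add: B_def c_def)
  qed
  have "\<exists>j<p. x j \<noteq> 0"
  proof (rule ccontr)
    assume z0: "\<not> (\<exists>j<p. x j \<noteq> 0)"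
    then have "x p = 0"
      using x'[OF sep(2)] sep(3) by simp
    then show False
      using x(1) z0 less_Suc_eq by auto
  qed
  then show ?thesis
    using tangent by (intro exI[of _ x] exI[of _ "\<lambda>l j. x p * M l j"]) simp
qed

lemma tangent_outer_plus_mult_if_not_separating:
  assumes G: "\<forall>i<k. finite (G i)" "G k = {r}" and f: "f r = 0" and p: "2 \<le> p"
    and nonsep: "\<And>M. group_pairing G p Y (\<lambda>a j. \<Sum>l<p. Y a l * M l j) k = 0 \<Longrightarrow>
      \<forall>i<k. group_pairing G p Y (\<lambda>a j. \<Sum>l<p. Y a l * M l j) i = 0"
  shows "\<exists>z M. (\<exists>j<p. z j \<noteq> 0) \<and>
    (\<forall>i\<le>k. group_pairing G p Y (\<lambda>a j. z j * f a + (\<Sum>l<p. Y a l * M l j)) i = 0)"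
proof -
  obtain z where z: "\<exists>j<p. z j \<noteq> 0" "(\<Sum>j<p. Y r j * z j) = 0"
    using homogeneous_system_nontrivial_solution[of 1 p "\<lambda>_ j. Y r j"] p by auto
  define Yz where "Yz a = (\<Sum>j<p. Y a j * z j)" for a
  have gram: "group_pairing G p Y (\<lambda>a j. \<Sum>l<p. Y a l * (z l * z j)) i = (\<Sum>a\<in>G i. (Yz a)\<^sup>2)" for i
    unfolding Yz_def by (rule group_pairing_gram)
  have "group_pairing G p Y (\<lambda>a j. \<Sum>l<p. Y a l * (z l * z j)) k = 0"
    using gram G(2) z(2) by (simp add: Yz_def)
  then have "\<forall>i<k. group_pairing G p Y (\<lambda>a j. \<Sum>l<p. Y a l * (z l * z j)) i = 0"
    by (rule nonsep)
  then have Yz0: "Yz a = 0" if "i < k" "a \<in> G i" for i a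
    using that G(1) gram by (simp add: sum_nonneg_eq_0_iff)
  have "group_pairing G p Y (\<lambda>a j. z j * f a + (\<Sum>l<p. Y a l * 0)) i = 0" if "i \<le> k" for i
  proof -
    have "group_pairing G p Y (\<lambda>a j. z j * f a + (\<Sum>l<p. Y a l * 0)) i = (\<Sum>a\<in>G i. f a * Yz a)"
      unfolding group_pairing_def Yz_def
      by (subst sum.swap) (simp add: sum_distrib_left algebra_simps)
    also have "\<dots> = 0"
      using that Yz0 G(2) f by (cases "i < k") simp_all
    finally show ?thesis .
  qed
  then show ?thesis
    using z(1) by (intro exI[of _ z] exI[of _ "\<lambda>_ _. 0"]) simp
qed

(* Either some M separates the last constraint on Y M from another one, and then p >= k leaves
   room for z; or every constraint on Y M follows from the last one, and then any z orthogonal to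
   the row r (p >= 2) makes Y z vanish on all groups, so that f z^T itself is tangent. *)

lemma tangent_outer_plus_mult_exists:
  assumes G: "\<forall>i<k. finite (G i)" "G k = {r}" and f: "f r = 0" and p: "2 \<le> p" "k \<le> p"
  obtains z M where "\<exists>j<p. z j \<noteq> 0"
    "\<forall>i\<le>k. group_pairing G p Y (\<lambda>a j. z j * f a + (\<Sum>l<p. Y a l * M l j)) i = 0"
proof (cases "\<exists>M i0. i0 < k \<and> group_pairing G p Y (\<lambda>a j. \<Sum>l<p. Y a l * M l j) k = 0 \<and>
    group_pairing G p Y (\<lambda>a j. \<Sum>l<p. Y a l * M l j) i0 \<noteq> 0")
  case True
  then obtain M i0 where "i0 < k" "group_pairing G p Y (\<lambda>a j. \<Sum>l<p. Y a l * M l j) k = 0"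
      "group_pairing G p Y (\<lambda>a j. \<Sum>l<p. Y a l * M l j) i0 \<noteq> 0"
    by blast
  with tangent_outer_plus_mult_if_separating[where G = G and p = p and Y = Y and M = M and f = f]
  show ?thesis
    using G f p that by blast
next
  case False
  then have "\<forall>i<k. group_pairing G p Y (\<lambda>a j. \<Sum>l<p. Y a l * M l j) i = 0"
    if "group_pairing G p Y (\<lambda>a j. \<Sum>l<p. Y a l * M l j) k = 0" for M
    using that by blast
  with tangent_outer_plus_mult_if_not_separating[where G = G and p = p and Y = Y and f = f]
  show ?thesis
    using G f p that by blast
qed

lemma psd_form_of_second_order_conditions:
  assumes sym: "symmetric_form n S" and SY: "annihilates n p S Y"
    and G: "\<forall>i<k. finite (G i)" "G k = {r}" and norm: "(\<Sum>j<p. (Y r j)\<^sup>2) = 1"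
    and p: "2 \<le> p" "k \<le> p"
    and second_order: "\<And>W. \<forall>i\<le>k. group_pairing G p Y W i = 0 \<Longrightarrow>
      0 \<le> (\<Sum>j<p. quad_form n S (\<lambda>a. W a j))"
  shows "psd_form n S"
  unfolding psd_form_def
proof (rule ccontr)
  assume "\<not> (\<forall>g. 0 \<le> quad_form n S g)"
  then obtain g where "quad_form n S g < 0"
    by (auto simp: not_le)
  then obtain f where f: "f r = 0" "quad_form n S f < 0"
    using exists_negative_direction_vanishing_at[OF sym SY norm] by blast
  obtain z M where z: "\<exists>j<p. z j \<noteq> 0"
    and tangent: "\<forall>i\<le>k. group_pairing G p Y (\<lambda>a j. z j * f a + (\<Sum>l<p. Y a l * M l j)) i = 0"
    using tangent_outer_plus_mult_exists[where G = G and p = p and Y = Y and f = f] G f(1) p by blast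
  have "0 < (\<Sum>j<p. (z j)\<^sup>2)"
  proof -
    obtain j0 where "j0 < p" "z j0 \<noteq> 0"
      using z by blast
    then have "0 < (z j0)\<^sup>2" "(z j0)\<^sup>2 \<le> (\<Sum>j<p. (z j)\<^sup>2)"
      by (auto intro: member_le_sum)
    then show ?thesis by linarith
  qed
  then have "(\<Sum>j<p. quad_form n S (\<lambda>a. z j * f a + (\<Sum>l<p. Y a l * M l j))) < 0"
    unfolding curvature_outer_plus_mult[OF sym SY] using f(2) by (simp add: mult_pos_neg)
  then show False
    using second_order[OF tangent] by simp
qed

section \<open>Frobenius products and psd matrices\<close>

lemma index_mult_mat_sum:
  "A \<in> carrier_mat m l \<Longrightarrow> B \<in> carrier_mat l n \<Longrightarrow> a < m \<Longrightarrow> j < n \<Longrightarrow>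
    (A * B) $$ (a, j) = (\<Sum>b<l. A $$ (a, b) * B $$ (b, j))"
  by (simp add: scalar_prod_def lessThan_atLeast0)

lemma frob_inner_eq_sum:
  "A \<in> carrier_mat m n \<Longrightarrow> B \<in> carrier_mat m n \<Longrightarrow>
    frob_inner A B = (\<Sum>j<n. \<Sum>a<m. A $$ (a, j) * B $$ (a, j))"
  unfolding frob_inner_def mtrace_def
  by (auto simp: scalar_prod_def lessThan_atLeast0 intro!: sum.cong)

lemma frob_inner_diff_left:
  "A \<in> carrier_mat m n \<Longrightarrow> B \<in> carrier_mat m n \<Longrightarrow> X \<in> carrier_mat m n \<Longrightarrow>
    frob_inner (A - B) X = frob_inner A X - frob_inner B X"
proof -
  assume A: "A \<in> carrier_mat m n" and B: "B \<in> carrier_mat m n" and X: "X \<in> carrier_mat m n"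
  then have "A - B \<in> carrier_mat m n"
    by (intro minus_carrier_mat)
  then show ?thesis
    using A B X by (simp add: frob_inner_eq_sum left_diff_distrib sum_subtractf)
qed

lemma mtrace_mult_comm:
  assumes "A \<in> carrier_mat m n" "B \<in> carrier_mat n m"
  shows "mtrace (A * B) = mtrace (B * A)"
proof -
  have "mtrace (A * B) = (\<Sum>a<m. \<Sum>b<n. A $$ (a, b) * B $$ (b, a))"
    using assms by (auto simp: mtrace_def scalar_prod_def lessThan_atLeast0 intro!: sum.cong)
  also have "\<dots> = (\<Sum>b<n. \<Sum>a<m. B $$ (b, a) * A $$ (a, b))"
    by (subst sum.swap) (simp add: mult.commute)
  also have "\<dots> = mtrace (B * A)"
    using assms by (auto simp: mtrace_def scalar_prod_def lessThan_atLeast0 intro!: sum.cong)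
  finally show ?thesis .
qed

lemma frob_inner_self_eq_mtrace:
  "U \<in> carrier_mat m n \<Longrightarrow> frob_inner U U = mtrace (U * transpose_mat U)"
  unfolding frob_inner_def by (rule mtrace_mult_comm) auto

lemma bm_cost_eq_sdp_cost:
  assumes C: "C \<in> carrier_mat m m" and Z: "Z \<in> carrier_mat m p"
  shows "bm_cost C Z = sdp_cost C (Z * transpose_mat Z)"
proof -
  have "bm_cost C Z = mtrace ((transpose_mat Z * transpose_mat C) * Z)"
    using C Z by (simp add: bm_cost_def frob_inner_def transpose_mult)
  also have "\<dots> = mtrace (Z * (transpose_mat Z * transpose_mat C))"
    using C Z by (intro mtrace_mult_comm) auto
  also have "\<dots> = mtrace ((Z * transpose_mat Z) * transpose_mat C)"
    using C Z by (simp add: assoc_mult_mat[of Z m p _ m _ m])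
  also have "\<dots> = mtrace (transpose_mat C * (Z * transpose_mat Z))"
    using C Z by (intro mtrace_mult_comm) auto
  also have "\<dots> = sdp_cost C (Z * transpose_mat Z)"
    by (simp add: sdp_cost_def frob_inner_def)
  finally show ?thesis .
qed

lemma frob_inner_gram_of_annihilator:
  assumes S: "S \<in> carrier_mat n n" "transpose_mat S = S"
    and Y: "Y \<in> carrier_mat n p" and SY: "S * Y = 0\<^sub>m n p"
  shows "frob_inner S (Y * transpose_mat Y) = 0"
proof -
  have "transpose_mat S * (Y * transpose_mat Y) = (S * Y) * transpose_mat Y"
    using S Y by (simp add: assoc_mult_mat[of S n n Y p "transpose_mat Y" n])
  also have "\<dots> = 0\<^sub>m n n"
    using Y SY by simp
  finally have "transpose_mat S * (Y * transpose_mat Y) = 0\<^sub>m n n" .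
  then show ?thesis
    using Y by (simp add: frob_inner_def mtrace_def)
qed

lemma psd_gram:
  assumes Z: "Z \<in> carrier_mat m p"
  shows "psd (Z * transpose_mat Z)"
  unfolding psd_def
proof
  fix v :: "real vec"
  assume "v \<in> carrier_vec (dim_row (Z * transpose_mat Z))"
  then have v: "v \<in> carrier_vec m"
    using Z by simp
  define w where "w = transpose_mat Z *\<^sub>v v"
  have "v \<bullet> (Z * transpose_mat Z *\<^sub>v v) = v \<bullet> (Z *\<^sub>v w)"
    using Z v by (simp add: w_def)
  also have "\<dots> = w \<bullet> w"
    using Z v transpose_vec_mult_scalar[OF Z, of w v] by (simp add: w_def)
  also have "\<dots> \<ge> 0"
    by (simp add: scalar_prod_def sum_nonneg)
  finally show "0 \<le> v \<bullet> (Z * transpose_mat Z *\<^sub>v v)" .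
qed

lemma psd_imp_psd_form:
  assumes X: "X \<in> carrier_mat n n" and "psd X"
  shows "psd_form n (\<lambda>a b. X $$ (a, b))"
  unfolding psd_form_def
proof
  fix f
  have "0 \<le> vec n f \<bullet> (X *\<^sub>v vec n f)"
    using assms by (simp add: psd_def)
  also have "vec n f \<bullet> (X *\<^sub>v vec n f) = quad_form n (\<lambda>a b. X $$ (a, b)) f"
    using X by (simp add: scalar_prod_def bilin_form_def lessThan_atLeast0)
  finally show "0 \<le> quad_form n (\<lambda>a b. X $$ (a, b)) f" .
qed

lemma symmetric_form_of_transpose:
  "X \<in> carrier_mat n n \<Longrightarrow> transpose_mat X = X \<Longrightarrow> symmetric_form n (\<lambda>a b. X $$ (a, b))"
  unfolding symmetric_form_def
proof (intro allI impI)
  fix a b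
  assume "X \<in> carrier_mat n n" "transpose_mat X = X" "a < n" "b < n"
  then show "X $$ (a, b) = X $$ (b, a)"
    using index_transpose_mat(1)[of a X b] by simp
qed

lemma frob_inner_nonneg_of_psd:
  assumes S: "S \<in> carrier_mat n n" "psd_form n (\<lambda>a b. S $$ (a, b))"
    and X: "X \<in> carrier_mat n n" "transpose_mat X = X" "psd X"
  shows "0 \<le> frob_inner S X"
proof -
  have "0 \<le> (\<Sum>a<n. \<Sum>b<n. S $$ (a, b) * X $$ (a, b))"
    using X by (intro psd_form_inner_nonneg S(2) psd_imp_psd_form symmetric_form_of_transpose)
  also have "\<dots> = (\<Sum>b<n. \<Sum>a<n. S $$ (a, b) * X $$ (a, b))"
    by (rule sum.swap)
  also have "\<dots> = frob_inner S X"
    using S X by (simp add: frob_inner_eq_sum)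
  finally show ?thesis .
qed

section \<open>The block constraints and weak duality\<close>

definition group_rows :: "nat list \<Rightarrow> nat \<Rightarrow> nat set" where
  "group_rows ns i = (if i < length ns then {goff ns i..<goff ns i + ns ! i} else {sum_list ns})"

lemma goff_add_le_sum_list:
  assumes "i < length ns"
  shows "goff ns i + ns ! i \<le> sum_list ns"
proof -
  have "goff ns i + ns ! i = sum_list (take (Suc i) ns)"
    using assms by (simp add: goff_def take_Suc_conv_app_nth)
  also have "\<dots> \<le> sum_list ns"
    by (metis append_take_drop_id sum_list_append le_add1)
  finally show ?thesis .
qed

lemma group_rows_subset: "group_rows ns i \<subseteq> {..<sum_list ns + 1}"
  using goff_add_le_sum_list[of i ns] by (auto simp: group_rows_def)

lemma finite_group_rows: "finite (group_rows ns i)"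
  by (simp add: group_rows_def)

lemma sum_restrict_group_rows:
  "(\<Sum>a<sum_list ns + 1. if a \<in> group_rows ns i then F a else 0) = (\<Sum>a\<in>group_rows ns i. F a)"
proof -
  have "(\<Sum>a<sum_list ns + 1. if a \<in> group_rows ns i then F a else 0) =
      sum F ({..<sum_list ns + 1} \<inter> group_rows ns i)"
    by (rule sum.inter_restrict[symmetric]) simp
  also have "{..<sum_list ns + 1} \<inter> group_rows ns i = group_rows ns i"
    using group_rows_subset by blast
  finally show ?thesis .
qed

lemma Acon_index:
  "a < sum_list ns + 1 \<Longrightarrow> b < sum_list ns + 1 \<Longrightarrow>
    Acon ns i $$ (a, b) = (if a = b \<and> a \<in> group_rows ns i then 1 else 0)"
  by (simp add: Acon_def group_rows_def)

lemma Acon_carrier: "Acon ns i \<in> carrier_mat (sum_list ns + 1) (sum_list ns + 1)"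
  by (simp add: Acon_def)

lemma Aadj_carrier: "Aadj ns \<nu> \<in> carrier_mat (sum_list ns + 1) (sum_list ns + 1)"
  by (simp add: Aadj_def)

lemma frob_inner_Acon_mult:
  assumes Y: "Y \<in> carrier_mat (sum_list ns + 1) p" and W: "W \<in> carrier_mat (sum_list ns + 1) p"
  shows "frob_inner (Acon ns i * Y) W =
    group_pairing (group_rows ns) p (\<lambda>a j. Y $$ (a, j)) (\<lambda>a j. W $$ (a, j)) i"
proof -
  have AY: "(Acon ns i * Y) $$ (a, j) = (if a \<in> group_rows ns i then Y $$ (a, j) else 0)"
    if "a < sum_list ns + 1" "j < p" for a j
  proof -
    have "(Acon ns i * Y) $$ (a, j) = (\<Sum>b<sum_list ns + 1. Acon ns i $$ (a, b) * Y $$ (b, j))"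
      by (rule index_mult_mat_sum[OF Acon_carrier Y that])
    also have "\<dots> = (\<Sum>b<sum_list ns + 1.
        if b = a then (if a \<in> group_rows ns i then Y $$ (a, j) else 0) else 0)"
      using that(1) by (intro sum.cong refl) (auto simp: Acon_index)
    finally show ?thesis
      using that(1) by (subst (asm) sum.delta) auto
  qed
  have "frob_inner (Acon ns i * Y) W =
      (\<Sum>j<p. \<Sum>a<sum_list ns + 1. (Acon ns i * Y) $$ (a, j) * W $$ (a, j))"
    using Y W by (intro frob_inner_eq_sum mult_carrier_mat[OF Acon_carrier])
  also have "\<dots> = (\<Sum>j<p. \<Sum>a<sum_list ns + 1.
      if a \<in> group_rows ns i then Y $$ (a, j) * W $$ (a, j) else 0)"
    by (intro sum.cong refl) (simp add: AY)
  finally show ?thesis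
    by (simp only: sum_restrict_group_rows group_pairing_def)
qed

lemma frob_inner_Acon:
  assumes X: "X \<in> carrier_mat (sum_list ns + 1) (sum_list ns + 1)"
  shows "frob_inner (Acon ns i) X = (\<Sum>a\<in>group_rows ns i. X $$ (a, a))"
proof -
  have "frob_inner (Acon ns i) X =
      (\<Sum>b<sum_list ns + 1. \<Sum>a<sum_list ns + 1. Acon ns i $$ (a, b) * X $$ (a, b))"
    by (rule frob_inner_eq_sum[OF Acon_carrier X])
  also have "\<dots> = (\<Sum>b<sum_list ns + 1. \<Sum>a<sum_list ns + 1.
      if a = b then (if b \<in> group_rows ns i then X $$ (b, b) else 0) else 0)"
    by (intro sum.cong refl) (auto simp: Acon_index)
  also have "\<dots> = (\<Sum>b<sum_list ns + 1. if b \<in> group_rows ns i then X $$ (b, b) else 0)"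
    by (intro sum.cong refl) (simp only: sum.delta finite_lessThan, simp)
  finally show ?thesis
    by (simp only: sum_restrict_group_rows)
qed

lemma mtrace_dblk:
  assumes "i < length ns"
  shows "mtrace (dblk ns i X) = (\<Sum>a\<in>group_rows ns i. X $$ (a, a))"
  using assms sum.atLeastLessThan_shift_0[of "\<lambda>a. X $$ (a, a)" "goff ns i" "goff ns i + ns ! i"]
  by (simp add: mtrace_def dblk_def group_rows_def atLeast0LessThan comp_def)

lemma sdp_feasible_frob_inner_Acon:
  assumes "sdp_feasible ns X" "i \<le> length ns"
  shows "frob_inner (Acon ns i) X = 1"
proof -
  have X: "X \<in> carrier_mat (sum_list ns + 1) (sum_list ns + 1)"
    using assms(1) by (simp add: sdp_feasible_def)
  show ?thesis
  proof (cases "i < length ns")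
    case True
    then show ?thesis
      using assms(1) by (simp add: frob_inner_Acon[OF X] mtrace_dblk[symmetric] sdp_feasible_def)
  next
    case False
    then show ?thesis
      using assms by (simp add: frob_inner_Acon[OF X] group_rows_def sdp_feasible_def)
  qed
qed

lemma frob_inner_Aadj:
  assumes X: "X \<in> carrier_mat (sum_list ns + 1) (sum_list ns + 1)"
  shows "frob_inner (Aadj ns \<nu>) X = (\<Sum>i<length ns + 1. \<nu> $ i * frob_inner (Acon ns i) X)"
proof -
  let ?N = "sum_list ns + 1" and ?k = "length ns + 1"
  have "frob_inner (Aadj ns \<nu>) X =
      (\<Sum>b<?N. \<Sum>a<?N. \<Sum>i<?k. \<nu> $ i * (Acon ns i $$ (a, b) * X $$ (a, b)))"
    using X by (auto simp del: sum.lessThan_Suc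
        simp: frob_inner_eq_sum[of _ ?N ?N] Aadj_def sum_distrib_right mult.assoc intro!: sum.cong)
  also have "\<dots> = (\<Sum>b<?N. \<Sum>i<?k. \<Sum>a<?N. \<nu> $ i * (Acon ns i $$ (a, b) * X $$ (a, b)))"
    by (rule sum.cong[OF refl], rule sum.swap)
  also have "\<dots> = (\<Sum>i<?k. \<Sum>b<?N. \<Sum>a<?N. \<nu> $ i * (Acon ns i $$ (a, b) * X $$ (a, b)))"
    by (rule sum.swap)
  also have "\<dots> = (\<Sum>i<?k. \<nu> $ i * frob_inner (Acon ns i) X)"
    by (simp del: sum.lessThan_Suc add: frob_inner_eq_sum[OF Acon_carrier X] sum_distrib_left)
  finally show ?thesis .
qed

lemma sdp_cost_eq_dual:
  assumes C: "C \<in> carrier_mat (sum_list ns + 1) (sum_list ns + 1)" and X: "sdp_feasible ns X"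
  shows "sdp_cost C X = frob_inner (C - Aadj ns \<nu>) X + (\<Sum>i<length ns + 1. \<nu> $ i)"
proof -
  have Xc: "X \<in> carrier_mat (sum_list ns + 1) (sum_list ns + 1)"
    using X by (simp add: sdp_feasible_def)
  have "frob_inner (Aadj ns \<nu>) X = (\<Sum>i<length ns + 1. \<nu> $ i)"
    using X by (simp add: frob_inner_Aadj[OF Xc] sdp_feasible_frob_inner_Acon)
  then show ?thesis
    by (simp add: sdp_cost_def frob_inner_diff_left[OF C Aadj_carrier Xc])
qed

lemma dblk_gram:
  assumes Z: "Z \<in> carrier_mat (sum_list ns + 1) p" and i: "i < length ns"
  shows "dblk ns i (Z * transpose_mat Z) = blk ns i Z * transpose_mat (blk ns i Z)"
proof (rule eq_matI)
  fix a b
  assume "a < dim_row (blk ns i Z * transpose_mat (blk ns i Z))"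
    "b < dim_col (blk ns i Z * transpose_mat (blk ns i Z))"
  then have "goff ns i + a < sum_list ns + 1" "goff ns i + b < sum_list ns + 1" "a < ns ! i" "b < ns ! i"
    using goff_add_le_sum_list[OF i] by (auto simp: blk_def)
  then show "dblk ns i (Z * transpose_mat Z) $$ (a, b) = (blk ns i Z * transpose_mat (blk ns i Z)) $$ (a, b)"
    using Z by (simp add: dblk_def blk_def scalar_prod_def)
qed (auto simp: dblk_def blk_def)

lemma frob_inner_lastrow:
  "Z \<in> carrier_mat (sum_list ns + 1) p \<Longrightarrow>
    frob_inner (lastrow ns Z) (lastrow ns Z) = (\<Sum>j<p. (Z $$ (sum_list ns, j))\<^sup>2)"
  by (simp add: frob_inner_eq_sum[of _ 1 p] lastrow_def power2_eq_square)

lemma bm_feasible_imp_sdp_feasible: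
  assumes Z: "bm_feasible ns p Z"
  shows "sdp_feasible ns (Z * transpose_mat Z)"
proof -
  have Zc: "Z \<in> carrier_mat (sum_list ns + 1) p"
    using Z by (simp add: bm_feasible_def)
  have "mtrace (dblk ns i (Z * transpose_mat Z)) = 1" if "i < length ns" for i
  proof -
    have "blk ns i Z \<in> carrier_mat (ns ! i) p"
      using Zc by (simp add: blk_def)
    then show ?thesis
      using Z that by (simp add: dblk_gram[OF Zc that] frob_inner_self_eq_mtrace[symmetric]
          bm_feasible_def frob_norm_def)
  qed
  moreover have "(Z * transpose_mat Z) $$ (sum_list ns, sum_list ns) = 1"
  proof -
    have "frob_inner (lastrow ns Z) (lastrow ns Z) = 1"
      using Z by (simp add: bm_feasible_def frob_norm_def)
    then show ?thesis
      using Zc by (simp add: frob_inner_lastrow scalar_prod_def lessThan_atLeast0 power2_eq_square)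
  qed
  ultimately show ?thesis
    using Zc psd_gram[OF Zc] by (simp add: sdp_feasible_def transpose_mult)
qed

lemma sdp_optimal_of_dual_certificate:
  assumes C: "C \<in> carrier_mat (sum_list ns + 1) (sum_list ns + 1)"
    and Y: "Y \<in> carrier_mat (sum_list ns + 1) p" "sdp_feasible ns (Y * transpose_mat Y)"
    and S: "transpose_mat (C - Aadj ns \<nu>) = C - Aadj ns \<nu>"
      "(C - Aadj ns \<nu>) * Y = 0\<^sub>m (sum_list ns + 1) p"
      "psd_form (sum_list ns + 1) (\<lambda>a b. (C - Aadj ns \<nu>) $$ (a, b))"
    and X: "sdp_feasible ns X"
  shows "sdp_cost C (Y * transpose_mat Y) \<le> sdp_cost C X"
proof -
  have Sc: "C - Aadj ns \<nu> \<in> carrier_mat (sum_list ns + 1) (sum_list ns + 1)"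
    by (intro minus_carrier_mat Aadj_carrier)
  have "sdp_cost C (Y * transpose_mat Y) = (\<Sum>i<length ns + 1. \<nu> $ i)"
    using sdp_cost_eq_dual[OF C Y(2), of \<nu>] frob_inner_gram_of_annihilator[OF Sc S(1) Y(1) S(2)] by simp
  also have "\<dots> \<le> sdp_cost C X"
    using sdp_cost_eq_dual[OF C X, of \<nu>] frob_inner_nonneg_of_psd[OF Sc S(3), of X] X
    by (simp add: sdp_feasible_def)
  finally show ?thesis .
qed

lemma bm_optimal_of_sdp_optimal:
  assumes C: "C \<in> carrier_mat (sum_list ns + 1) (sum_list ns + 1)"
    and Y: "bm_feasible ns p Y" and Z: "bm_feasible ns p Z"
    and sdp_optimal: "\<And>X. sdp_feasible ns X \<Longrightarrow> sdp_cost C (Y * transpose_mat Y) \<le> sdp_cost C X"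
  shows "bm_cost C Y \<le> bm_cost C Z"
proof -
  have Yc: "Y \<in> carrier_mat (sum_list ns + 1) p" and Zc: "Z \<in> carrier_mat (sum_list ns + 1) p"
    using Y Z by (simp_all add: bm_feasible_def)
  have "bm_cost C Y = sdp_cost C (Y * transpose_mat Y)"
    by (rule bm_cost_eq_sdp_cost[OF C Yc])
  also have "\<dots> \<le> sdp_cost C (Z * transpose_mat Z)"
    by (rule sdp_optimal[OF bm_feasible_imp_sdp_feasible[OF Z]])
  also have "\<dots> = bm_cost C Z"
    by (rule bm_cost_eq_sdp_cost[OF C Zc, symmetric])
  finally show ?thesis .
qed

section \<open>Second-order critical points\<close>

lemma Smat_carrier: "Smat ns C Y \<in> carrier_mat (sum_list ns + 1) (sum_list ns + 1)"
  unfolding Smat_def by (intro minus_carrier_mat Aadj_carrier)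

lemma transpose_Aadj: "transpose_mat (Aadj ns \<nu>) = Aadj ns \<nu>"
  by (intro eq_matI) (auto simp: Aadj_def Acon_def intro!: sum.cong)

lemma transpose_Smat:
  assumes "C \<in> carrier_mat (sum_list ns + 1) (sum_list ns + 1)" "transpose_mat C = C"
  shows "transpose_mat (Smat ns C Y) = Smat ns C Y"
  using assms by (simp add: Smat_def transpose_minus[OF _ Aadj_carrier] transpose_Aadj)

lemma annihilates_of_mult_zero:
  assumes S: "S \<in> carrier_mat n n" and Y: "Y \<in> carrier_mat n p" and SY: "S * Y = 0\<^sub>m n p"
  shows "annihilates n p (\<lambda>a b. S $$ (a, b)) (\<lambda>a j. Y $$ (a, j))"
  unfolding annihilates_def
proof (intro allI impI)
  fix a j
  assume "a < n" "j < p"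
  then show "(\<Sum>b<n. S $$ (a, b) * Y $$ (b, j)) = 0"
    using SY index_mult_mat_sum[OF S Y, of a j] by simp
qed

lemma second_order_critical_curvature:
  assumes soc: "second_order_critical ns p C Y"
    and tangent: "\<forall>i\<le>length ns. group_pairing (group_rows ns) p (\<lambda>a j. Y $$ (a, j)) W i = 0"
  shows "0 \<le> (\<Sum>j<p. quad_form (sum_list ns + 1) (\<lambda>a b. Smat ns C Y $$ (a, b)) (\<lambda>a. W a j))"
proof -
  let ?N = "sum_list ns + 1" and ?S = "Smat ns C Y"
  define Wm where "Wm = mat ?N p (\<lambda>(a, j). W a j)"
  have Y: "Y \<in> carrier_mat ?N p"
    using soc by (simp add: second_order_critical_def bm_feasible_def)
  have Wm: "Wm \<in> carrier_mat ?N p"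
    by (simp add: Wm_def)
  have S: "?S \<in> carrier_mat ?N ?N"
    by (rule Smat_carrier)
  have "group_pairing (group_rows ns) p (\<lambda>a j. Y $$ (a, j)) (\<lambda>a j. Wm $$ (a, j)) i =
      group_pairing (group_rows ns) p (\<lambda>a j. Y $$ (a, j)) W i" for i
    using group_rows_subset[of ns i]
    by (auto simp: group_pairing_def Wm_def intro!: sum.cong)
  then have "Wm \<in> tangent ns Y"
    using tangent Y Wm by (simp add: tangent_def frob_inner_Acon_mult)
  then have "0 \<le> frob_inner Wm (?S * Wm)"
    using soc by (simp add: second_order_critical_def)
  also have "frob_inner Wm (?S * Wm) = (\<Sum>j<p. \<Sum>a<?N. Wm $$ (a, j) * (?S * Wm) $$ (a, j))"
    using S Wm by (intro frob_inner_eq_sum mult_carrier_mat)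
  also have "\<dots> = (\<Sum>j<p. \<Sum>a<?N. Wm $$ (a, j) * (\<Sum>b<?N. ?S $$ (a, b) * Wm $$ (b, j)))"
    by (intro sum.cong refl) (simp del: sum.lessThan_Suc add: index_mult_mat_sum[OF S Wm])
  also have "\<dots> = (\<Sum>j<p. \<Sum>a<?N. W a j * (\<Sum>b<?N. ?S $$ (a, b) * W b j))"
    by (auto simp del: sum.lessThan_Suc simp: Wm_def intro!: sum.cong)
  finally show ?thesis
    by (simp only: bilin_form_def)
qed

lemma second_order_critical_psd_form:
  assumes C: "C \<in> carrier_mat (sum_list ns + 1) (sum_list ns + 1)" "transpose_mat C = C"
    and p: "max 2 (length ns) \<le> p" and soc: "second_order_critical ns p C Y"
  shows "psd_form (sum_list ns + 1) (\<lambda>a b. Smat ns C Y $$ (a, b))"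
proof (rule psd_form_of_second_order_conditions)
  have Y: "Y \<in> carrier_mat (sum_list ns + 1) p"
    using soc by (simp add: second_order_critical_def bm_feasible_def)
  have S: "Smat ns C Y \<in> carrier_mat (sum_list ns + 1) (sum_list ns + 1)"
    by (rule Smat_carrier)
  show "symmetric_form (sum_list ns + 1) (\<lambda>a b. Smat ns C Y $$ (a, b))"
    by (intro symmetric_form_of_transpose S transpose_Smat C)
  show "annihilates (sum_list ns + 1) p (\<lambda>a b. Smat ns C Y $$ (a, b)) (\<lambda>a j. Y $$ (a, j))"
    using soc by (intro annihilates_of_mult_zero S Y) (simp add: second_order_critical_def)
  show "\<forall>i<length ns. finite (group_rows ns i)" "group_rows ns (length ns) = {sum_list ns}"
    by (simp_all add: finite_group_rows group_rows_def)
  have "frob_inner (lastrow ns Y) (lastrow ns Y) = 1"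
    using soc by (simp add: second_order_critical_def bm_feasible_def frob_norm_def)
  then show "(\<Sum>j<p. (Y $$ (sum_list ns, j))\<^sup>2) = 1"
    by (simp only: frob_inner_lastrow[OF Y])
  show "2 \<le> p" "length ns \<le> p"
    using p by simp_all
qed (rule second_order_critical_curvature[OF soc])

theorem corollary7:
  fixes ns :: "nat list" and p :: nat and C :: "real mat" and Y :: "real mat"
  assumes "length ns \<ge> 1"
    and "\<forall>i<length ns. ns ! i \<ge> 2"
    and "C \<in> carrier_mat (sum_list ns + 1) (sum_list ns + 1)"
    and "transpose_mat C = C"
    and "p \<ge> max 2 (length ns)"
    and "second_order_critical ns p C Y"
  shows "(\<forall>Z. bm_feasible ns p Z \<longrightarrow> bm_cost C Y \<le> bm_cost C Z)
    \<and> sdp_feasible ns (Y * transpose_mat Y)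
    \<and> (\<forall>X. sdp_feasible ns X \<longrightarrow> sdp_cost C (Y * transpose_mat Y) \<le> sdp_cost C X)"
proof -
  have Y: "bm_feasible ns p Y" and SY: "Smat ns C Y * Y = 0\<^sub>m (sum_list ns + 1) p"
    using assms(6) by (simp_all add: second_order_critical_def)
  have Yc: "Y \<in> carrier_mat (sum_list ns + 1) p"
    using Y by (simp add: bm_feasible_def)
  have S: "transpose_mat (Smat ns C Y) = Smat ns C Y"
    by (rule transpose_Smat[OF assms(3,4)])
  have S_psd: "psd_form (sum_list ns + 1) (\<lambda>a b. Smat ns C Y $$ (a, b))"
    by (rule second_order_critical_psd_form[OF assms(3,4,5,6)])
  have sdp_optimal: "sdp_cost C (Y * transpose_mat Y) \<le> sdp_cost C X" if "sdp_feasible ns X" for X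
    using sdp_optimal_of_dual_certificate[OF assms(3) Yc bm_feasible_imp_sdp_feasible[OF Y]
        S[unfolded Smat_def] SY[unfolded Smat_def] S_psd[unfolded Smat_def] that] .
  then show ?thesis
    using bm_optimal_of_sdp_optimal[OF assms(3) Y] bm_feasible_imp_sdp_feasible[OF Y] by blast
qed

end
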